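(* Let $\mathfrak{A}$, $A$, $B$ be $C^*$-algebras, where $A$ and $B$ are $\mathfrak{A}$-bimodules with compatible actions. Let $\gamma$ be a $C^*$-norm on the algebraic tensor product $A\odot B$, let $A\otimes_\gamma B$ be the completion of $A\odot B$ with respect to $\gamma$, and let $I_\gamma$ be the closure in $A\otimes_\gamma B$ of the ideal $I=I_{A,B}$. Then there is an isometric isomorphism $$(A\otimes_\gamma B)/I_\gamma\simeq A\otimes_{\mathfrak{A},\gamma}B,$$ where $A\otimes_{\mathfrak{A},\gamma}B$ is the completion of $A\odot_{\mathfrak{A}}B=(A\odot B)/I$ with respect to the quotient norm $\|x+I\|_\gamma:=\inf_{i\in I}\|x+i\|_\gamma$.
   Context: An $\mathfrak{A}$-bimodule with compatible actions is a $C^*$-algebra $A$ with maps $\mathfrak{A}\times A\to A$, $(\alpha,a)\mapsto\alpha\cdot a$ and $A\times\mathfrak{A}\to A$, $(a,\alpha)\mapsto a\cdot\alpha$, which are bilinear, satisfy $\|a\cdot\alpha\|,\|\alpha\cdot a\|\le k\|a\|\|\alpha\|$ for some $k>0$, and satisfy $\alpha\cdot(ab)=(\alpha\cdot a)b$, $(ab)\cdot\alpha=a(b\cdot\alpha)$, $(\alpha\cdot a)^*=a^*\cdot\alpha^*$, $(a\cdot\alpha)^*=\alpha^*\cdot a^*$ for all $\alpha\in\mathfrak{A}$, $a,b\in A$. $I_{A,B}$ denotes the ideal of $A\odot B$ generated by all elements $a\cdot\alpha\otimes b-a\otimes\alpha\cdot b$ ($\alpha\in\mathfrak{A}$, $a\in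 A$, $b\in B$), and $A\odot_{\mathfrak{A}}B:=(A\odot B)/I_{A,B}$. *)

theory Defs
  imports Complex_Main
begin

text \<open>A C*-algebra is modelled by a type of class real_normed_algebra and banach
  (non-unital complete normed algebra) together with an explicit complex scalar
  multiplication sm (extending scaleR) and an involution st satisfying the C*-identity.\<close>

definition cstar_alg :: "(complex \<Rightarrow> 'a::{real_normed_algebra,banach} \<Rightarrow> 'a) \<Rightarrow> ('a \<Rightarrow> 'a) \<Rightarrow> bool" where
  "cstar_alg sm st \<longleftrightarrow>
     (\<forall>c d x. sm c (sm d x) = sm (c * d) x) \<and>
     (\<forall>x. sm 1 x = x) \<and>
     (\<forall>c x y. sm c (x + y) = sm c x + sm c y) \<and>
     (\<forall>c d x. sm (c + d) x = sm c x + sm d x) \<and>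
     (\<forall>r x. sm (complex_of_real r) x = scaleR r x) \<and>
     (\<forall>c x. norm (sm c x) = cmod c * norm x) \<and>
     (\<forall>c x y. sm c (x * y) = sm c x * y \<and> sm c (x * y) = x * sm c y) \<and>
     (\<forall>x. st (st x) = x) \<and>
     (\<forall>x y. st (x + y) = st x + st y) \<and>
     (\<forall>c x. st (sm c x) = sm (cnj c) (st x)) \<and>
     (\<forall>x y. st (x * y) = st y * st x) \<and>
     (\<forall>x. norm (st x * x) = norm x ^ 2)"

definition compat_bimod ::
  "(complex \<Rightarrow> 'u::{real_normed_algebra,banach} \<Rightarrow> 'u) \<Rightarrow> ('u \<Rightarrow> 'u) \<Rightarrow>
   (complex \<Rightarrow> 'a::{real_normed_algebra,banach} \<Rightarrow> 'a) \<Rightarrow> ('a \<Rightarrow> 'a) \<Rightarrow>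
   ('u \<Rightarrow> 'a \<Rightarrow> 'a) \<Rightarrow> ('a \<Rightarrow> 'u \<Rightarrow> 'a) \<Rightarrow> bool" where
  "compat_bimod su stu sa sta la ra \<longleftrightarrow>
     \<comment> \<open>bilinearity\<close>
     (\<forall>\<alpha> \<beta> a. la (\<alpha> + \<beta>) a = la \<alpha> a + la \<beta> a) \<and>
     (\<forall>\<alpha> a b. la \<alpha> (a + b) = la \<alpha> a + la \<alpha> b) \<and>
     (\<forall>c \<alpha> a. la (su c \<alpha>) a = sa c (la \<alpha> a)) \<and>
     (\<forall>c \<alpha> a. la \<alpha> (sa c a) = sa c (la \<alpha> a)) \<and>
     (\<forall>\<alpha> \<beta> a. ra a (\<alpha> + \<beta>) = ra a \<alpha> + ra a \<beta>) \<and>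
     (\<forall>\<alpha> a b. ra (a + b) \<alpha> = ra a \<alpha> + ra b \<alpha>) \<and>
     (\<forall>c \<alpha> a. ra a (su c \<alpha>) = sa c (ra a \<alpha>)) \<and>
     (\<forall>c \<alpha> a. ra (sa c a) \<alpha> = sa c (ra a \<alpha>)) \<and>
     \<comment> \<open>bimodule axioms\<close>
     (\<forall>\<alpha> \<beta> a. la (\<alpha> * \<beta>) a = la \<alpha> (la \<beta> a)) \<and>
     (\<forall>\<alpha> \<beta> a. ra a (\<alpha> * \<beta>) = ra (ra a \<alpha>) \<beta>) \<and>
     (\<forall>\<alpha> \<beta> a. la \<alpha> (ra a \<beta>) = ra (la \<alpha> a) \<beta>) \<and>
     \<comment> \<open>boundedness\<close>
     (\<exists>k>0. \<forall>\<alpha> a. norm (ra a \<alpha>) \<le> k * norm a * norm \<alpha> \<and> norm (la \<alpha> a) \<le> k * norm a * norm \<alpha>) \<and>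
     \<comment> \<open>compatibility\<close>
     (\<forall>\<alpha> a b. la \<alpha> (a * b) = la \<alpha> a * b) \<and>
     (\<forall>\<alpha> a b. ra (a * b) \<alpha> = a * ra b \<alpha>) \<and>
     (\<forall>\<alpha> a. sta (la \<alpha> a) = ra (sta a) (stu \<alpha>)) \<and>
     (\<forall>\<alpha> a. sta (ra a \<alpha>) = la (stu \<alpha>) (sta a))"

text \<open>Elements of A \<odot> B are represented by finitely supported formal complex
  combinations of pairs (a,b), i.e. functions 'a \<times> 'b \<Rightarrow> complex with finite support,
  modulo the subspace tker generated by the bilinearity relations.\<close>

definition fin :: "('a \<times> 'b \<Rightarrow> complex) set" where
  "fin = {f. finite {p. f p \<noteq> 0}}"

definition tzero :: "'a \<times> 'b \<Rightarrow> complex" where "tzero = (\<lambda>p. 0)"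
definition tadd :: "('a \<times> 'b \<Rightarrow> complex) \<Rightarrow> ('a \<times> 'b \<Rightarrow> complex) \<Rightarrow> ('a \<times> 'b \<Rightarrow> complex)" where
  "tadd f g = (\<lambda>p. f p + g p)"
definition tdiff :: "('a \<times> 'b \<Rightarrow> complex) \<Rightarrow> ('a \<times> 'b \<Rightarrow> complex) \<Rightarrow> ('a \<times> 'b \<Rightarrow> complex)" where
  "tdiff f g = (\<lambda>p. f p - g p)"
definition tsmult :: "complex \<Rightarrow> ('a \<times> 'b \<Rightarrow> complex) \<Rightarrow> ('a \<times> 'b \<Rightarrow> complex)" where
  "tsmult c f = (\<lambda>p. c * f p)"
definition etens :: "'a \<Rightarrow> 'b \<Rightarrow> ('a \<times> 'b \<Rightarrow> complex)" where
  "etens a b = (\<lambda>p. if p = (a, b) then 1 else 0)"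

text \<open>Product: (a \<otimes> b)(a' \<otimes> b') = aa' \<otimes> bb', extended bilinearly.\<close>
definition tmult :: "('a::times \<times> 'b::times \<Rightarrow> complex) \<Rightarrow> ('a \<times> 'b \<Rightarrow> complex) \<Rightarrow> ('a \<times> 'b \<Rightarrow> complex)" where
  "tmult f g = (\<lambda>p. \<Sum>x\<in>{q. f q \<noteq> 0}. \<Sum>y\<in>{q. g q \<noteq> 0}.
      if (fst x * fst y, snd x * snd y) = p then f x * g y else 0)"

text \<open>Involution: (c a \<otimes> b)^* = cnj c a^* \<otimes> b^*.\<close>
definition tstar :: "('a \<Rightarrow> 'a) \<Rightarrow> ('b \<Rightarrow> 'b) \<Rightarrow> ('a \<times> 'b \<Rightarrow> complex) \<Rightarrow> ('a \<times> 'b \<Rightarrow> complex)" where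
  "tstar sta stb f = (\<lambda>(a, b). cnj (f (sta a, stb b)))"

inductive_set tspan :: "('a \<times> 'b \<Rightarrow> complex) set \<Rightarrow> ('a \<times> 'b \<Rightarrow> complex) set" for S where
  tspan_zero: "tzero \<in> tspan S"
| tspan_base: "x \<in> S \<Longrightarrow> x \<in> tspan S"
| tspan_add: "x \<in> tspan S \<Longrightarrow> y \<in> tspan S \<Longrightarrow> tadd x y \<in> tspan S"
| tspan_smult: "x \<in> tspan S \<Longrightarrow> tsmult c x \<in> tspan S"

definition tker :: "(complex \<Rightarrow> 'a::plus \<Rightarrow> 'a) \<Rightarrow> (complex \<Rightarrow> 'b::plus \<Rightarrow> 'b) \<Rightarrow> ('a \<times> 'b \<Rightarrow> complex) set" where
  "tker sa sb = tspan
     ({tdiff (etens (a + a') b) (tadd (etens a b) (etens a' b)) | a a' b. True} \<union>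
      {tdiff (etens a (b + b')) (tadd (etens a b) (etens a b')) | a b b'. True} \<union>
      {tdiff (etens (sa c a) b) (tsmult c (etens a b)) | c a b. True} \<union>
      {tdiff (etens a (sb c b)) (tsmult c (etens a b)) | c a b. True})"

text \<open>Two-sided ideal generated by G in the algebra A \<odot> B (lifted to representatives:
  it contains the kernel N).\<close>
inductive_set gen_ideal :: "('a::times \<times> 'b::times \<Rightarrow> complex) set \<Rightarrow> ('a \<times> 'b \<Rightarrow> complex) set \<Rightarrow> ('a \<times> 'b \<Rightarrow> complex) set"
  for N G where
  gi_ker: "x \<in> N \<Longrightarrow> x \<in> gen_ideal N G"
| gi_gen: "x \<in> G \<Longrightarrow> x \<in> gen_ideal N G"
| gi_add: "x \<in> gen_ideal N G \<Longrightarrow> y \<in> gen_ideal N G \<Longrightarrow> tadd x y \<in> gen_ideal N G"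
| gi_smult: "x \<in> gen_ideal N G \<Longrightarrow> tsmult c x \<in> gen_ideal N G"
| gi_lmult: "x \<in> gen_ideal N G \<Longrightarrow> y \<in> fin \<Longrightarrow> tmult y x \<in> gen_ideal N G"
| gi_rmult: "x \<in> gen_ideal N G \<Longrightarrow> y \<in> fin \<Longrightarrow> tmult x y \<in> gen_ideal N G"

definition I_AB :: "(complex \<Rightarrow> 'a::{plus,times} \<Rightarrow> 'a) \<Rightarrow> (complex \<Rightarrow> 'b::{plus,times} \<Rightarrow> 'b) \<Rightarrow>
    ('a \<Rightarrow> 'u \<Rightarrow> 'a) \<Rightarrow> ('u \<Rightarrow> 'b \<Rightarrow> 'b) \<Rightarrow> ('a \<times> 'b \<Rightarrow> complex) set" where
  "I_AB sa sb raA laB = gen_ideal (tker sa sb)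
     {tdiff (etens (raA a \<alpha>) b) (etens a (laB \<alpha> b)) | a \<alpha> b. True}"

text \<open>A C*-norm on A \<odot> B, given on representatives: it vanishes exactly on the kernel.\<close>
definition cstar_norm :: "(complex \<Rightarrow> 'a::{plus,times} \<Rightarrow> 'a) \<Rightarrow> (complex \<Rightarrow> 'b::{plus,times} \<Rightarrow> 'b) \<Rightarrow>
    ('a \<Rightarrow> 'a) \<Rightarrow> ('b \<Rightarrow> 'b) \<Rightarrow> (('a \<times> 'b \<Rightarrow> complex) \<Rightarrow> real) \<Rightarrow> bool" where
  "cstar_norm sa sb sta stb \<gamma> \<longleftrightarrow>
     (\<forall>x\<in>fin. \<gamma> x \<ge> 0 \<and> (\<gamma> x = 0 \<longleftrightarrow> x \<in> tker sa sb)) \<and>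
     (\<forall>x\<in>fin. \<forall>y\<in>fin. \<gamma> (tadd x y) \<le> \<gamma> x + \<gamma> y) \<and>
     (\<forall>c. \<forall>x\<in>fin. \<gamma> (tsmult c x) = cmod c * \<gamma> x) \<and>
     (\<forall>x\<in>fin. \<forall>y\<in>fin. \<gamma> (tmult x y) \<le> \<gamma> x * \<gamma> y) \<and>
     (\<forall>x\<in>fin. \<gamma> (tmult (tstar sta stb x) x) = \<gamma> x ^ 2)"

type_synonym ('a, 'b) tseq = "nat \<Rightarrow> ('a \<times> 'b \<Rightarrow> complex)"

definition pcauchy :: "(('a \<times> 'b \<Rightarrow> complex) \<Rightarrow> real) \<Rightarrow> ('a, 'b) tseq set" where
  "pcauchy p = {X. (\<forall>n. X n \<in> fin) \<and>
      (\<forall>e>0. \<exists>M. \<forall>m\<ge>M. \<forall>n\<ge>M. p (tdiff (X m) (X n)) < e)}"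

definition cnorm :: "(('a \<times> 'b \<Rightarrow> complex) \<Rightarrow> real) \<Rightarrow> ('a, 'b) tseq \<Rightarrow> real" where
  "cnorm p X = lim (\<lambda>n. p (X n))"

definition sadd :: "('a, 'b) tseq \<Rightarrow> ('a, 'b) tseq \<Rightarrow> ('a, 'b) tseq" where
  "sadd X Y = (\<lambda>n. tadd (X n) (Y n))"
definition sdiff :: "('a, 'b) tseq \<Rightarrow> ('a, 'b) tseq \<Rightarrow> ('a, 'b) tseq" where
  "sdiff X Y = (\<lambda>n. tdiff (X n) (Y n))"
definition ssmult :: "complex \<Rightarrow> ('a, 'b) tseq \<Rightarrow> ('a, 'b) tseq" where
  "ssmult c X = (\<lambda>n. tsmult c (X n))"
definition smult :: "('a::times, 'b::times) tseq \<Rightarrow> ('a, 'b) tseq \<Rightarrow> ('a, 'b) tseq" where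
  "smult X Y = (\<lambda>n. tmult (X n) (Y n))"
definition sstar :: "('a \<Rightarrow> 'a) \<Rightarrow> ('b \<Rightarrow> 'b) \<Rightarrow> ('a, 'b) tseq \<Rightarrow> ('a, 'b) tseq" where
  "sstar sta stb X = (\<lambda>n. tstar sta stb (X n))"

definition closure_ideal :: "(('a \<times> 'b \<Rightarrow> complex) \<Rightarrow> real) \<Rightarrow> ('a \<times> 'b \<Rightarrow> complex) set \<Rightarrow> ('a, 'b) tseq set" where
  "closure_ideal \<gamma> I = {X \<in> pcauchy \<gamma>. \<forall>e>0. \<exists>i\<in>I. cnorm \<gamma> (sdiff X (\<lambda>n. i)) < e}"

definition qnorm :: "(('a \<times> 'b \<Rightarrow> complex) \<Rightarrow> real) \<Rightarrow> ('a \<times> 'b \<Rightarrow> complex) set \<Rightarrow> ('a, 'b) tseq \<Rightarrow> real" where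
  "qnorm \<gamma> I X = Inf {cnorm \<gamma> (sdiff X Y) | Y. Y \<in> closure_ideal \<gamma> I}"

definition quot_seminorm :: "(('a \<times> 'b \<Rightarrow> complex) \<Rightarrow> real) \<Rightarrow> ('a \<times> 'b \<Rightarrow> complex) set \<Rightarrow> ('a \<times> 'b \<Rightarrow> complex) \<Rightarrow> real" where
  "quot_seminorm \<gamma> I x = Inf {\<gamma> (tadd x i) | i. i \<in> I}"

end

theory Submission
  imports Defs
begin

(* The isomorphism is the identity on representatives. The quotient seminorm
   q x = inf {\<gamma>(x + i) | i \<in> I} is dominated by \<gamma>, so every \<gamma>-Cauchy sequence in
   A \<odot> B is q-Cauchy and the algebraic operations are preserved on the nose.
   Isometry: both lim q(X n) and the norm of X + I\<^sub>\<gamma> are infima over I; an element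
   of I\<^sub>\<gamma> is approximated by constant sequences from I, and conversely
   q(X N) is approximated by \<gamma>(X N + i) for a single i \<in> I.
   Surjectivity: pass to a subsequence of a q-Cauchy sequence whose steps are
   geometrically small, lift each step to a representative of almost the same
   \<gamma>-norm by adding an element of I, and sum the corrections; the result is
   \<gamma>-Cauchy and differs from the original sequence by elements of I up to a
   q-null sequence. *)

lemma fin_tzero [simp]: "tzero \<in> fin"
  by (simp add: fin_def tzero_def)

lemma fin_tadd [simp]: "x \<in> fin \<Longrightarrow> y \<in> fin \<Longrightarrow> tadd x y \<in> fin"
  unfolding fin_def tadd_def mem_Collect_eq
  by (rule finite_subset[of _ "{p. x p \<noteq> 0} \<union> {p. y p \<noteq> 0}"]) auto

lemma fin_tsmult [simp]: "x \<in> fin \<Longrightarrow> tsmult c x \<in> fin"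
  unfolding fin_def tsmult_def mem_Collect_eq
  by (rule finite_subset[of _ "{p. x p \<noteq> 0}"]) auto

lemma fin_tdiff [simp]: "x \<in> fin \<Longrightarrow> y \<in> fin \<Longrightarrow> tdiff x y \<in> fin"
  unfolding fin_def tdiff_def mem_Collect_eq
  by (rule finite_subset[of _ "{p. x p \<noteq> 0} \<union> {p. y p \<noteq> 0}"]) auto

lemma fin_etens [simp]: "etens a b \<in> fin"
  unfolding fin_def etens_def mem_Collect_eq
  by (rule finite_subset[of _ "{(a, b)}"]) auto

lemma fin_tmult [simp]: "tmult x y \<in> fin"
proof (cases "finite {q. x q \<noteq> 0} \<and> finite {q. y q \<noteq> 0}")
  case True
  let ?S = "{q. x q \<noteq> 0} \<times> {q. y q \<noteq> 0}"
  have "{p. tmult x y p \<noteq> 0} \<subseteq> (\<lambda>(u, v). (fst u * fst v, snd u * snd v)) ` ?S"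
  proof
    fix p assume "p \<in> {p. tmult x y p \<noteq> 0}"
    then have "(\<Sum>u\<in>{q. x q \<noteq> 0}. \<Sum>v\<in>{q. y q \<noteq> 0}.
        if (fst u * fst v, snd u * snd v) = p then x u * y v else 0) \<noteq> 0"
      by (simp add: tmult_def)
    then obtain u where u: "u \<in> {q. x q \<noteq> 0}" and "(\<Sum>v\<in>{q. y q \<noteq> 0}.
        if (fst u * fst v, snd u * snd v) = p then x u * y v else 0) \<noteq> 0"
      by (rule sum.not_neutral_contains_not_neutral)
    from this(2) obtain v where v: "v \<in> {q. y q \<noteq> 0}"
      and "(if (fst u * fst v, snd u * snd v) = p then x u * y v else 0) \<noteq> 0"
      by (rule sum.not_neutral_contains_not_neutral)
    then have "p = (fst u * fst v, snd u * snd v)"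
      by (simp split: if_splits)
    with u v show "p \<in> (\<lambda>(u, v). (fst u * fst v, snd u * snd v)) ` ?S"
      by (intro image_eqI[of _ _ "(u, v)"]) auto
  qed
  with True show ?thesis
    unfolding fin_def mem_Collect_eq by (meson finite_SigmaI finite_imageI finite_subset)
next
  case False
  then have "tmult x y = (\<lambda>p. 0)"
    by (cases "finite {q. x q \<noteq> 0}") (simp_all add: tmult_def fun_eq_iff)
  then show ?thesis
    by (simp add: fin_def)
qed

lemma tspan_subset_fin:
  assumes "S \<subseteq> fin"
  shows "tspan S \<subseteq> fin"
proof
  fix x assume "x \<in> tspan S"
  then show "x \<in> fin"
    using assms by (induction rule: tspan.induct) auto
qed

lemma tker_subset_fin: "tker sa sb \<subseteq> fin"
  unfolding tker_def by (rule tspan_subset_fin) auto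

lemma tzero_in_tker: "tzero \<in> tker sa sb"
  unfolding tker_def by (rule tspan_zero)

lemma gen_ideal_subset_fin:
  assumes "N \<subseteq> fin" and "G \<subseteq> fin"
  shows "gen_ideal N G \<subseteq> fin"
proof
  fix x assume "x \<in> gen_ideal N G"
  then show "x \<in> fin"
    using assms by (induction rule: gen_ideal.induct) auto
qed

lemma I_AB_subset_fin: "I_AB sa sb raA laB \<subseteq> fin"
  unfolding I_AB_def by (rule gen_ideal_subset_fin) (auto intro: tker_subset_fin[THEN subsetD])

lemma pcauchy_fin: "X \<in> pcauchy p \<Longrightarrow> X n \<in> fin"
  by (simp add: pcauchy_def)

lemma tdiff_self [simp]: "tdiff x x = tzero"
  by (simp add: tdiff_def tzero_def)

lemma sdiff_self: "sdiff X X = (\<lambda>n. tzero)"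
  by (simp add: sdiff_def)

lemma pcauchy_geometric_subseq:
  assumes "X \<in> pcauchy p"
  obtains r where "\<And>k. k \<le> r k"
    and "\<And>k. p (tdiff (X (r (Suc k))) (X (r k))) < (1/2::real)^k"
proof -
  have "\<forall>k. \<exists>M. \<forall>m\<ge>M. \<forall>n\<ge>M. p (tdiff (X m) (X n)) < (1/2::real)^k"
    using assms unfolding pcauchy_def by auto
  then obtain M where M: "\<And>k m n. m \<ge> M k \<Longrightarrow> n \<ge> M k \<Longrightarrow> p (tdiff (X m) (X n)) < (1/2::real)^k"
    by metis
  define r where "r k = k + (\<Sum>l\<le>k. M l)" for k
  have "M k \<le> r k" for k
    unfolding r_def using member_le_sum[of k "{..k}" M] by simp
  moreover have "r k \<le> r (Suc k)" for k
    unfolding r_def by simp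
  ultimately have "p (tdiff (X (r (Suc k))) (X (r k))) < (1/2::real)^k" for k
    by (meson M le_trans)
  moreover have "k \<le> r k" for k
    by (simp add: r_def)
  ultimately show thesis
    using that by blast
qed

locale seminorm_subspace =
  fixes g :: "('a \<times> 'b \<Rightarrow> complex) \<Rightarrow> real" and I :: "('a \<times> 'b \<Rightarrow> complex) set"
  assumes nonneg: "x \<in> fin \<Longrightarrow> 0 \<le> g x"
    and triangle: "x \<in> fin \<Longrightarrow> y \<in> fin \<Longrightarrow> g (tadd x y) \<le> g x + g y"
    and homogeneous: "x \<in> fin \<Longrightarrow> g (tsmult c x) = cmod c * g x"
    and subspace_fin: "I \<subseteq> fin"
    and tzero_in: "tzero \<in> I"
    and tadd_in: "i \<in> I \<Longrightarrow> j \<in> I \<Longrightarrow> tadd i j \<in> I"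
    and tsmult_in: "i \<in> I \<Longrightarrow> tsmult c i \<in> I"
begin

abbreviation q :: "('a \<times> 'b \<Rightarrow> complex) \<Rightarrow> real"
  where "q \<equiv> quot_seminorm g I"

lemma fin_if_in: "i \<in> I \<Longrightarrow> i \<in> fin"
  using subspace_fin by auto

lemma g_tzero [simp]: "g tzero = 0"
proof -
  have "g (tsmult 0 tzero) = 0"
    using homogeneous[of tzero 0] by simp
  moreover have "tsmult 0 tzero = tzero"
    by (simp add: tsmult_def tzero_def)
  ultimately show ?thesis
    by metis
qed

lemma g_tdiff_commute: "x \<in> fin \<Longrightarrow> y \<in> fin \<Longrightarrow> g (tdiff x y) = g (tdiff y x)"
proof -
  assume "x \<in> fin" "y \<in> fin"
  moreover have "tdiff y x = tsmult (-1) (tdiff x y)"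
    by (simp add: tdiff_def tsmult_def)
  ultimately show ?thesis
    using homogeneous[of "tdiff x y" "-1"] by simp
qed

lemma g_le_add_tdiff: "x \<in> fin \<Longrightarrow> y \<in> fin \<Longrightarrow> g x \<le> g y + g (tdiff x y)"
proof -
  assume "x \<in> fin" "y \<in> fin"
  moreover have "tadd y (tdiff x y) = x"
    by (simp add: tadd_def tdiff_def)
  ultimately show ?thesis
    using triangle[of y "tdiff x y"] by simp
qed

lemma quot_seminorm_le: "x \<in> fin \<Longrightarrow> i \<in> I \<Longrightarrow> q x \<le> g (tadd x i)"
  unfolding quot_seminorm_def
  by (rule cInf_lower) (auto intro!: bdd_belowI[of _ 0] nonneg dest: fin_if_in)

lemma quot_seminorm_nonneg: "x \<in> fin \<Longrightarrow> 0 \<le> q x"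
  unfolding quot_seminorm_def
  by (rule cInf_greatest) (use tzero_in in \<open>auto intro!: nonneg dest: fin_if_in\<close>)

lemma quot_seminorm_le_seminorm: "x \<in> fin \<Longrightarrow> q x \<le> g x"
  using quot_seminorm_le[OF _ tzero_in] by (simp add: tadd_def tzero_def)

lemma quot_seminorm_tzero [simp]: "q tzero = 0"
  using quot_seminorm_le_seminorm[of tzero] quot_seminorm_nonneg[of tzero] by simp

lemma quot_seminorm_lessE:
  assumes "q x < r"
  obtains i where "i \<in> I" and "g (tadd x i) < r"
proof -
  have "{g (tadd x i) |i. i \<in> I} \<noteq> {}"
    using tzero_in by blast
  from cInf_lessD[OF this] show thesis
    using assms that unfolding quot_seminorm_def by blast
qed

lemma quot_seminorm_le_add_tdiff:
  assumes x: "x \<in> fin" and y: "y \<in> fin"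
  shows "q x \<le> q y + g (tdiff x y)"
proof -
  have "q x - g (tdiff x y) \<le> g (tadd y i)" if i: "i \<in> I" for i
  proof -
    have "tadd x i = tadd (tadd y i) (tdiff x y)"
      by (simp add: tadd_def tdiff_def algebra_simps)
    then have "g (tadd x i) \<le> g (tadd y i) + g (tdiff x y)"
      using triangle[of "tadd y i" "tdiff x y"] x y i by (simp add: fin_if_in)
    then show ?thesis
      using quot_seminorm_le[OF x i] by simp
  qed
  then have "q x - g (tdiff x y) \<le> q y"
    unfolding quot_seminorm_def[of g I y] using tzero_in by (blast intro: cInf_greatest)
  then show ?thesis
    by simp
qed

lemma quot_seminorm_tadd_in:
  assumes x: "x \<in> fin" and j: "j \<in> I"
  shows "q (tadd x j) \<le> q x"
proof -
  have "q (tadd x j) \<le> g (tadd x i)" if i: "i \<in> I" for i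
  proof -
    have "tadd (tadd x j) (tadd i (tsmult (-1) j)) = tadd x i"
      by (simp add: tadd_def tsmult_def)
    moreover have "tadd i (tsmult (-1) j) \<in> I"
      using i j tadd_in tsmult_in by blast
    ultimately show ?thesis
      using quot_seminorm_le[of "tadd x j"] x j by (metis fin_if_in fin_tadd)
  qed
  then show ?thesis
    unfolding quot_seminorm_def[of g I x] using tzero_in by (blast intro: cInf_greatest)
qed

lemma pcauchy_LIMSEQ_lipschitz:
  assumes X: "X \<in> pcauchy g"
    and f: "\<And>x y. x \<in> fin \<Longrightarrow> y \<in> fin \<Longrightarrow> f x \<le> f y + g (tdiff x y)"
  shows "(\<lambda>n. f (X n)) \<longlonglongrightarrow> lim (\<lambda>n. f (X n))"
proof -
  have "Cauchy (\<lambda>n. f (X n))"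
    unfolding Cauchy_def
  proof (intro allI impI)
    fix e :: real assume "0 < e"
    then obtain M where M: "\<forall>m\<ge>M. \<forall>n\<ge>M. g (tdiff (X m) (X n)) < e"
      using X by (auto simp: pcauchy_def)
    have "dist (f (X m)) (f (X n)) < e" if "M \<le> m" "M \<le> n" for m n
    proof -
      have "g (tdiff (X m) (X n)) < e" "g (tdiff (X n) (X m)) < e"
        using M that by auto
      moreover have "f (X m) \<le> f (X n) + g (tdiff (X m) (X n))" "f (X n) \<le> f (X m) + g (tdiff (X n) (X m))"
        using f pcauchy_fin[OF X] by auto
      ultimately show ?thesis
        by (simp add: dist_real_def abs_less_iff)
    qed
    then show "\<exists>M. \<forall>m\<ge>M. \<forall>n\<ge>M. dist (f (X m)) (f (X n)) < e"
      by blast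
  qed
  then show ?thesis
    using Cauchy_convergent_iff convergent_LIMSEQ_iff by blast
qed

lemma seminorm_LIMSEQ_cnorm: "X \<in> pcauchy g \<Longrightarrow> (\<lambda>n. g (X n)) \<longlonglongrightarrow> cnorm g X"
  unfolding cnorm_def by (erule pcauchy_LIMSEQ_lipschitz[OF _ g_le_add_tdiff])

lemma quot_seminorm_LIMSEQ_cnorm: "X \<in> pcauchy g \<Longrightarrow> (\<lambda>n. q (X n)) \<longlonglongrightarrow> cnorm q X"
  unfolding cnorm_def by (erule pcauchy_LIMSEQ_lipschitz[OF _ quot_seminorm_le_add_tdiff])

lemma cnorm_quot_seminorm_sdiff_self: "cnorm q (sdiff X X) = 0"
  by (simp add: sdiff_self cnorm_def)

lemma pcauchy_quot_seminorm:
  assumes X: "X \<in> pcauchy g"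
  shows "X \<in> pcauchy q"
  unfolding pcauchy_def mem_Collect_eq
proof (intro conjI allI impI)
  fix n show "X n \<in> fin"
    using X by (rule pcauchy_fin)
next
  fix e :: real assume "0 < e"
  then obtain M where "\<forall>m\<ge>M. \<forall>n\<ge>M. g (tdiff (X m) (X n)) < e"
    using X unfolding pcauchy_def by blast
  moreover have "q (tdiff (X m) (X n)) \<le> g (tdiff (X m) (X n))" for m n
    using pcauchy_fin[OF X] by (simp add: quot_seminorm_le_seminorm)
  ultimately show "\<exists>M. \<forall>m\<ge>M. \<forall>n\<ge>M. q (tdiff (X m) (X n)) < e"
    by (meson le_less_trans)
qed

lemma pcauchy_const: "x \<in> fin \<Longrightarrow> (\<lambda>n. x) \<in> pcauchy g"
  by (simp add: pcauchy_def)

lemma pcauchy_sdiff: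
  assumes X: "X \<in> pcauchy g" and Y: "Y \<in> pcauchy g"
  shows "sdiff X Y \<in> pcauchy g"
  unfolding pcauchy_def mem_Collect_eq
proof (intro conjI allI impI)
  fix n show "sdiff X Y n \<in> fin"
    using X Y by (simp add: sdiff_def pcauchy_fin)
next
  fix e :: real assume "0 < e"
  then have "0 < e/2"
    by simp
  then obtain M1 M2 where
    M1: "\<forall>m\<ge>M1. \<forall>n\<ge>M1. g (tdiff (X m) (X n)) < e/2" and
    M2: "\<forall>m\<ge>M2. \<forall>n\<ge>M2. g (tdiff (Y m) (Y n)) < e/2"
    using X Y unfolding pcauchy_def by blast
  have "g (tdiff (sdiff X Y m) (sdiff X Y n)) < e" if "max M1 M2 \<le> m" "max M1 M2 \<le> n" for m n
  proof -
    have "tdiff (sdiff X Y m) (sdiff X Y n) = tadd (tdiff (X m) (X n)) (tsmult (-1) (tdiff (Y m) (Y n)))"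
      by (simp add: tdiff_def sdiff_def tadd_def tsmult_def algebra_simps)
    then have "g (tdiff (sdiff X Y m) (sdiff X Y n)) \<le> g (tdiff (X m) (X n)) + g (tdiff (Y m) (Y n))"
      using triangle[of "tdiff (X m) (X n)" "tsmult (-1) (tdiff (Y m) (Y n))"]
        homogeneous[of "tdiff (Y m) (Y n)" "-1"] pcauchy_fin[OF X] pcauchy_fin[OF Y]
      by simp
    moreover have "g (tdiff (X m) (X n)) < e/2" "g (tdiff (Y m) (Y n)) < e/2"
      using M1 M2 that by auto
    ultimately show ?thesis
      by simp
  qed
  then show "\<exists>M. \<forall>m\<ge>M. \<forall>n\<ge>M. g (tdiff (sdiff X Y m) (sdiff X Y n)) < e"
    by blast
qed

lemma const_in_closure_ideal:
  assumes i: "i \<in> I"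
  shows "(\<lambda>n. i) \<in> closure_ideal g I"
proof -
  have "cnorm g (sdiff (\<lambda>n. i) (\<lambda>n. i)) = 0"
    by (simp add: sdiff_self cnorm_def)
  moreover have "(\<lambda>n. i) \<in> pcauchy g"
    using i by (simp add: pcauchy_const fin_if_in)
  ultimately show ?thesis
    unfolding closure_ideal_def using i by (auto intro!: bexI[of _ i])
qed

lemma cnorm_quot_seminorm_le_cnorm_sdiff:
  assumes X: "X \<in> pcauchy g" and Y: "Y \<in> closure_ideal g I"
  shows "cnorm q X \<le> cnorm g (sdiff X Y)"
proof (rule field_le_epsilon)
  fix e :: real assume "0 < e"
  have Yc: "Y \<in> pcauchy g"
    using Y by (simp add: closure_ideal_def)
  obtain i where i: "i \<in> I" and close: "cnorm g (sdiff Y (\<lambda>n. i)) < e"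
    using Y \<open>0 < e\<close> by (auto simp: closure_ideal_def)
  have Ic: "sdiff Y (\<lambda>n. i) \<in> pcauchy g"
    using Yc i by (simp add: pcauchy_sdiff pcauchy_const fin_if_in)
  have "q (X n) \<le> g (sdiff X Y n) + g (sdiff Y (\<lambda>n. i) n)" for n
  proof -
    have "q (X n) \<le> g (tadd (X n) (tsmult (-1) i))"
      using quot_seminorm_le pcauchy_fin[OF X] tsmult_in[OF i] by blast
    also have "tadd (X n) (tsmult (-1) i) = tadd (sdiff X Y n) (sdiff Y (\<lambda>n. i) n)"
      by (simp add: tadd_def tsmult_def sdiff_def tdiff_def)
    also have "g \<dots> \<le> g (sdiff X Y n) + g (sdiff Y (\<lambda>n. i) n)"
      using pcauchy_fin[OF pcauchy_sdiff[OF X Yc]] pcauchy_fin[OF Ic] by (rule triangle)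
    finally show ?thesis .
  qed
  then have "cnorm q X \<le> cnorm g (sdiff X Y) + cnorm g (sdiff Y (\<lambda>n. i))"
    using quot_seminorm_LIMSEQ_cnorm[OF X]
      tendsto_add[OF seminorm_LIMSEQ_cnorm[OF pcauchy_sdiff[OF X Yc]] seminorm_LIMSEQ_cnorm[OF Ic]]
    by (auto intro: LIMSEQ_le)
  with close show "cnorm q X \<le> cnorm g (sdiff X Y) + e"
    by simp
qed

lemma closure_ideal_cnorm_sdiff_le:
  assumes X: "X \<in> pcauchy g" and "0 < e"
  obtains Y where "Y \<in> closure_ideal g I" and "cnorm g (sdiff X Y) \<le> cnorm q X + e"
proof -
  have "0 < e/2"
    using \<open>0 < e\<close> by simp
  then obtain N1 N2 where
    N1: "\<forall>n\<ge>N1. dist (q (X n)) (cnorm q X) < e/2" and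
    N2: "\<forall>m\<ge>N2. \<forall>n\<ge>N2. g (tdiff (X m) (X n)) < e/2"
    using quot_seminorm_LIMSEQ_cnorm[OF X] X unfolding lim_sequentially pcauchy_def by blast
  define N where "N = max N1 N2"
  have "dist (q (X N)) (cnorm q X) < e/2"
    using N1 by (simp add: N_def)
  then have "q (X N) < cnorm q X + e/2"
    unfolding dist_real_def abs_less_iff by linarith
  then obtain i where i: "i \<in> I" and gi: "g (tadd (X N) i) < cnorm q X + e/2"
    by (rule quot_seminorm_lessE)
  define Y where "Y = (\<lambda>n::nat. tsmult (-1) i)"
  have Y: "Y \<in> closure_ideal g I"
    unfolding Y_def using i by (intro const_in_closure_ideal tsmult_in)
  have "g (sdiff X Y n) \<le> cnorm q X + e" if "N \<le> n" for n
  proof -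
    have "sdiff X Y n = tadd (tadd (X N) i) (tdiff (X n) (X N))"
      by (simp add: sdiff_def Y_def tadd_def tdiff_def tsmult_def algebra_simps)
    then have "g (sdiff X Y n) \<le> g (tadd (X N) i) + g (tdiff (X n) (X N))"
      using triangle[of "tadd (X N) i" "tdiff (X n) (X N)"] pcauchy_fin[OF X] fin_if_in[OF i]
      by simp
    moreover have "g (tdiff (X n) (X N)) < e/2"
      using N2 that by (simp add: N_def)
    ultimately show ?thesis
      using gi by simp
  qed
  moreover have "Y \<in> pcauchy g"
    using Y by (simp add: closure_ideal_def)
  ultimately have "cnorm g (sdiff X Y) \<le> cnorm q X + e"
    using seminorm_LIMSEQ_cnorm[OF pcauchy_sdiff[OF X]] by (blast intro: LIMSEQ_le_const2)
  with Y show thesis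
    by (rule that)
qed

lemma cnorm_quot_seminorm_eq_qnorm:
  assumes X: "X \<in> pcauchy g"
  shows "cnorm q X = qnorm g I X"
proof -
  let ?S = "{cnorm g (sdiff X Y) | Y. Y \<in> closure_ideal g I}"
  have lower: "cnorm q X \<le> s" if "s \<in> ?S" for s
    using that X by (auto intro: cnorm_quot_seminorm_le_cnorm_sdiff)
  have "?S \<noteq> {}"
    using const_in_closure_ideal[OF tzero_in] by blast
  then have "cnorm q X \<le> Inf ?S"
    using lower by (rule cInf_greatest)
  moreover have "Inf ?S \<le> cnorm q X + e" if e: "0 < e" for e
  proof -
    obtain Y where "Y \<in> closure_ideal g I" and "cnorm g (sdiff X Y) \<le> cnorm q X + e"
      using closure_ideal_cnorm_sdiff_le[OF X e] .
    moreover have "bdd_below ?S"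
      using lower by (rule bdd_belowI)
    ultimately show ?thesis
      by (blast intro: cInf_lower2)
  qed
  ultimately show ?thesis
    unfolding qnorm_def by (simp add: antisym field_le_epsilon)
qed

lemma pcauchy_geometric:
  assumes fin: "\<And>k. X k \<in> fin" and geometric: "\<And>k. g (tdiff (X (Suc k)) (X k)) < (1/2::real)^k"
  shows "X \<in> pcauchy g"
proof -
  have telescope: "g (tdiff (X m) (X n)) \<le> 2 * (1/2::real)^n - 2 * (1/2)^m" if "n \<le> m" for m n
    using that
  proof (induction m rule: dec_induct)
    case base
    then show ?case
      by simp
  next
    case (step m)
    have "tdiff (X (Suc m)) (X n) = tadd (tdiff (X (Suc m)) (X m)) (tdiff (X m) (X n))"
      by (simp add: tdiff_def tadd_def)
    then have "g (tdiff (X (Suc m)) (X n)) \<le> g (tdiff (X (Suc m)) (X m)) + g (tdiff (X m) (X n))"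
      using triangle fin by simp
    then show ?case
      using step.IH geometric[of m] by simp
  qed
  have bound: "g (tdiff (X m) (X n)) \<le> 2 * (1/2::real)^min m n" for m n
  proof (cases "n \<le> m")
    case True
    then have "g (tdiff (X m) (X n)) \<le> 2 * (1/2::real)^n - 2 * (1/2)^m"
      by (rule telescope)
    also have "\<dots> \<le> 2 * (1/2)^min m n"
      using True by (simp add: min_def)
    finally show ?thesis .
  next
    case False
    have "g (tdiff (X m) (X n)) = g (tdiff (X n) (X m))"
      by (rule g_tdiff_commute[OF fin fin])
    also have "\<dots> \<le> 2 * (1/2::real)^m - 2 * (1/2)^n"
      using False by (simp add: telescope)
    also have "\<dots> \<le> 2 * (1/2)^min m n"
      using False by (simp add: min_def)
    finally show ?thesis .
  qed
  show ?thesis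
    unfolding pcauchy_def mem_Collect_eq
  proof (intro conjI allI impI)
    fix n show "X n \<in> fin"
      by (rule fin)
  next
    fix e :: real assume "0 < e"
    then obtain N where N: "(1/2::real)^N < e/2"
      using real_arch_pow_inv[of "e/2" "1/2"] by auto
    have "g (tdiff (X m) (X n)) < e" if "N \<le> m" "N \<le> n" for m n
    proof -
      have "(1/2::real)^min m n \<le> (1/2)^N"
        using that by (simp add: power_decreasing)
      then show ?thesis
        using bound[of m n] N by linarith
    qed
    then show "\<exists>M. \<forall>m\<ge>M. \<forall>n\<ge>M. g (tdiff (X m) (X n)) < e"
      by blast
  qed
qed

lemma pcauchy_subseq_tdiff_LIMSEQ_zero:
  assumes Z: "Z \<in> pcauchy q" and r: "\<And>k. k \<le> r k"
  shows "(\<lambda>k. q (tdiff (Z (r k)) (Z k))) \<longlonglongrightarrow> 0"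
  unfolding lim_sequentially
proof (intro allI impI)
  fix e :: real assume "0 < e"
  then obtain M where M: "\<forall>m\<ge>M. \<forall>n\<ge>M. q (tdiff (Z m) (Z n)) < e"
    using Z unfolding pcauchy_def by blast
  have "dist (q (tdiff (Z (r k)) (Z k))) 0 < e" if "M \<le> k" for k
    using M that r[of k] quot_seminorm_nonneg pcauchy_fin[OF Z] by (simp add: dist_real_def)
  then show "\<exists>M. \<forall>k\<ge>M. dist (q (tdiff (Z (r k)) (Z k))) 0 < e"
    by blast
qed

lemma pcauchy_quot_seminorm_lift:
  assumes Z: "Z \<in> pcauchy q"
  obtains X where "X \<in> pcauchy g" and "cnorm q (sdiff X Z) = 0"
proof -
  obtain r where r: "\<And>k. k \<le> r k"
    and step: "\<And>k. q (tdiff (Z (r (Suc k))) (Z (r k))) < (1/2::real)^k"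
    using pcauchy_geometric_subseq[OF Z] by blast
  have "\<forall>k. \<exists>j\<in>I. g (tadd (tdiff (Z (r (Suc k))) (Z (r k))) j) < (1/2::real)^k"
    using step by (blast elim: quot_seminorm_lessE)
  then obtain i where i: "\<And>k. i k \<in> I"
    and lifted: "\<And>k. g (tadd (tdiff (Z (r (Suc k))) (Z (r k))) (i k)) < (1/2::real)^k"
    by metis
  define J where "J k = (\<lambda>p. \<Sum>l<k. i l p)" for k
  have J_in: "J k \<in> I" for k
  proof (induction k)
    case 0
    then show ?case
      using tzero_in by (simp add: J_def tzero_def)
  next
    case (Suc k)
    have "J (Suc k) = tadd (J k) (i k)"
      by (simp add: J_def tadd_def)
    then show ?case
      using Suc.IH i tadd_in by simp
  qed
  define X where "X k = tadd (Z (r k)) (J k)" for k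
  have X_fin: "X k \<in> fin" for k
    using pcauchy_fin[OF Z] J_in fin_if_in by (simp add: X_def)
  have "tdiff (X (Suc k)) (X k) = tadd (tdiff (Z (r (Suc k))) (Z (r k))) (i k)" for k
    by (simp add: X_def J_def tdiff_def tadd_def algebra_simps)
  then have "X \<in> pcauchy g"
    using X_fin lifted by (intro pcauchy_geometric) simp_all
  moreover have "(\<lambda>k. q (sdiff X Z k)) \<longlonglongrightarrow> 0"
  proof (rule tendsto_sandwich[OF _ _ tendsto_const pcauchy_subseq_tdiff_LIMSEQ_zero[OF Z r]])
    have "sdiff X Z k = tadd (tdiff (Z (r k)) (Z k)) (J k)" for k
      by (simp add: sdiff_def X_def tdiff_def tadd_def algebra_simps)
    then show "\<forall>\<^sub>F k in sequentially. q (sdiff X Z k) \<le> q (tdiff (Z (r k)) (Z k))"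
      using quot_seminorm_tadd_in pcauchy_fin[OF Z] J_in by simp
    show "\<forall>\<^sub>F k in sequentially. 0 \<le> q (sdiff X Z k)"
      using quot_seminorm_nonneg X_fin pcauchy_fin[OF Z] by (simp add: sdiff_def)
  qed
  then have "cnorm q (sdiff X Z) = 0"
    unfolding cnorm_def by (rule limI)
  ultimately show thesis
    by (rule that)
qed

end

lemma seminorm_subspace_I_AB:
  assumes "cstar_norm sa sb sta stb \<gamma>"
  shows "seminorm_subspace \<gamma> (I_AB sa sb raA laB)"
proof
  show "I_AB sa sb raA laB \<subseteq> fin"
    by (rule I_AB_subset_fin)
  show "tzero \<in> I_AB sa sb raA laB"
    unfolding I_AB_def by (rule gi_ker[OF tzero_in_tker])
qed (use assms in \<open>auto simp: cstar_norm_def I_AB_def intro: gi_add gi_smult\<close>)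

theorem proposition2p3:
  fixes su :: "complex \<Rightarrow> 'u::{real_normed_algebra,banach} \<Rightarrow> 'u" and stu :: "'u \<Rightarrow> 'u"
    and sa :: "complex \<Rightarrow> 'a::{real_normed_algebra,banach} \<Rightarrow> 'a" and sta :: "'a \<Rightarrow> 'a"
    and sb :: "complex \<Rightarrow> 'b::{real_normed_algebra,banach} \<Rightarrow> 'b" and stb :: "'b \<Rightarrow> 'b"
    and laA :: "'u \<Rightarrow> 'a \<Rightarrow> 'a" and raA :: "'a \<Rightarrow> 'u \<Rightarrow> 'a"
    and laB :: "'u \<Rightarrow> 'b \<Rightarrow> 'b" and raB :: "'b \<Rightarrow> 'u \<Rightarrow> 'b"
    and \<gamma> :: "('a \<times> 'b \<Rightarrow> complex) \<Rightarrow> real"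
  assumes "cstar_alg su stu" and "cstar_alg sa sta" and "cstar_alg sb stb"
    and "compat_bimod su stu sa sta laA raA"
    and "compat_bimod su stu sb stb laB raB"
    and "cstar_norm sa sb sta stb \<gamma>"
  defines "I \<equiv> I_AB sa sb raA laB"
  shows "\<exists>\<Phi>. (\<forall>X\<in>pcauchy \<gamma>. \<Phi> X \<in> pcauchy (quot_seminorm \<gamma> I)) \<and>
    (\<forall>X\<in>pcauchy \<gamma>. cnorm (quot_seminorm \<gamma> I) (\<Phi> X) = qnorm \<gamma> I X) \<and>
    (\<forall>X\<in>pcauchy \<gamma>. \<forall>Y\<in>pcauchy \<gamma>.
        cnorm (quot_seminorm \<gamma> I) (sdiff (\<Phi> (sadd X Y)) (sadd (\<Phi> X) (\<Phi> Y))) = 0) \<and>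
    (\<forall>c. \<forall>X\<in>pcauchy \<gamma>.
        cnorm (quot_seminorm \<gamma> I) (sdiff (\<Phi> (ssmult c X)) (ssmult c (\<Phi> X))) = 0) \<and>
    (\<forall>X\<in>pcauchy \<gamma>. \<forall>Y\<in>pcauchy \<gamma>.
        cnorm (quot_seminorm \<gamma> I) (sdiff (\<Phi> (smult X Y)) (smult (\<Phi> X) (\<Phi> Y))) = 0) \<and>
    (\<forall>X\<in>pcauchy \<gamma>.
        cnorm (quot_seminorm \<gamma> I) (sdiff (\<Phi> (sstar sta stb X)) (sstar sta stb (\<Phi> X))) = 0) \<and>
    (\<forall>Z\<in>pcauchy (quot_seminorm \<gamma> I). \<exists>X\<in>pcauchy \<gamma>.
        cnorm (quot_seminorm \<gamma> I) (sdiff (\<Phi> X) Z) = 0)"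
proof -
  interpret seminorm_subspace \<gamma> I
    unfolding I_def using assms(6) by (rule seminorm_subspace_I_AB)
  have "\<forall>Z\<in>pcauchy (quot_seminorm \<gamma> I). \<exists>X\<in>pcauchy \<gamma>. cnorm (quot_seminorm \<gamma> I) (sdiff X Z) = 0"
    by (metis pcauchy_quot_seminorm_lift)
  then show ?thesis
    by (intro exI[of _ "\<lambda>X. X"])
      (simp add: pcauchy_quot_seminorm cnorm_quot_seminorm_eq_qnorm cnorm_quot_seminorm_sdiff_self)
qed

end
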